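(* Let $\mathbb{F}$ be a finite field, let $m\ge 1$, and let $d\ge 0$, $d_z\ge 1$, $D\ge 0$ be integers. Let $A(\mathbf{x},z)\in\mathbb{F}[x_1,\dots,x_m,z]$ be a non-zero polynomial with $\deg_z A\le d_z$ and $(1,1,\dots,1,d)$-weighted degree at most $D$. Let $\mathbf{b}\in\mathbb{F}^m$ be such that the univariate polynomial $A(\mathbf{b},z)\in\mathbb{F}[z]$ is non-zero and has no repeated roots (in an algebraic closure of $\mathbb{F}$). Let $S\subseteq\mathbb{F}^m$ be a set of directions such that for every $\mathbf{u}\in S$ there is a univariate polynomial $P_{\mathbf{b},\mathbf{u}}(t)\in\mathbb{F}[t]$ of degree at most $d$ with $$A(\mathbf{b}+t\mathbf{u},\,P_{\mathbf{b},\mathbf{u}}(t))\equiv 0 \quad\text{in }\mathbb{F}[t].$$ If $|S|> d_z\, D\,|\mathbb{F}|^{m-1}$, then there exists a polynomial $P(\mathbf{x})\in\mathbb{F}[x_1,\dots,x_m]$ of total degree at most $d$ such that $A(\mathbf{x},P(\mathbf{x}))\equiv 0$. Moreover, there is a set $S'\subseteq S$ with $|S'|\ge |S|/d_z$ such that for every $\mathbf{u}\in S'$ we have $P(\mathbf{b}+t\mathbf{u})=P_{\mathbf{b},\mathbf{u}}(t)$ as polynomials in $t$.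
   Context: For a polynomial $g(x_1,\dots,x_n)$ and a weight vector $\mathbf{w}=(w_1,\dots,w_n)\in\mathbb{N}^n$, the $\mathbf{w}$-weighted degree of $g$ is the maximum of $w_1e_1+\cdots+w_ne_n$ over monomials $x_1^{e_1}\cdots x_n^{e_n}$ with non-zero coefficient in $g$. Here the weight is $1$ on each $x_i$ and $d$ on $z$. *)

theory Defs
  imports "HOL-Library.Poly_Mapping" "HOL-Algebra.Algebraic_Closure_Type"
begin

text \<open>Variable i has index i;
  for F[x_1,...,x_m,z] the variables x_1..x_m are indices 0..m-1 and z is index m.\<close>

type_synonym 'a mpoly = "(nat \<Rightarrow>\<^sub>0 nat) \<Rightarrow>\<^sub>0 'a"

definition mvars_in :: "'a::zero mpoly \<Rightarrow> nat set \<Rightarrow> bool" where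
  "mvars_in p V \<longleftrightarrow> (\<forall>\<alpha>\<in>Poly_Mapping.keys p. Poly_Mapping.keys \<alpha> \<subseteq> V)"

definition deg_in :: "'a::zero mpoly \<Rightarrow> nat \<Rightarrow> nat" where
  "deg_in p i = Max (insert 0 ((\<lambda>\<alpha>. Poly_Mapping.lookup \<alpha> i) ` Poly_Mapping.keys p))"

definition weighted_deg :: "(nat \<Rightarrow> nat) \<Rightarrow> 'a::zero mpoly \<Rightarrow> nat" where
  "weighted_deg w p = Max (insert 0 ((\<lambda>\<alpha>. \<Sum>i\<in>Poly_Mapping.keys \<alpha>. w i * Poly_Mapping.lookup \<alpha> i) ` Poly_Mapping.keys p))"

definition total_deg :: "'a::zero mpoly \<Rightarrow> nat" where
  "total_deg p = weighted_deg (\<lambda>_. 1) p"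

definition mpoly_eval :: "('a::zero \<Rightarrow> 'b::comm_semiring_1) \<Rightarrow> 'a mpoly \<Rightarrow> (nat \<Rightarrow> 'b) \<Rightarrow> 'b" where
  "mpoly_eval \<phi> p f = (\<Sum>\<alpha>\<in>Poly_Mapping.keys p. \<phi> (Poly_Mapping.lookup p \<alpha>) * (\<Prod>i\<in>Poly_Mapping.keys \<alpha>. f i ^ Poly_Mapping.lookup \<alpha> i))"

definition mpoly_const :: "'a::zero \<Rightarrow> 'a mpoly" where
  "mpoly_const c = Poly_Mapping.single 0 c"

definition mpoly_var :: "nat \<Rightarrow> 'a::{zero,one} mpoly" where
  "mpoly_var i = Poly_Mapping.single (Poly_Mapping.single i 1) 1"

end

theory Submission
  imports Defs
begin

text \<open>
  Since \<open>A(b, z)\<close> is separable, every \<open>P\<^sub>b\<^sub>,\<^sub>u(0)\<close> is a simple root of it, and by pigeonhole one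
  root \<open>r\<close> is shared by at least \<open>|S|/d\<^sub>z\<close> directions. Newton--Hensel lifting of \<open>r\<close> along the
  generic line \<open>b + t x\<close> produces a power series \<open>G(x, t)\<close>, truncated at \<open>t\<^sup>d\<close>, whose coefficient
  of \<open>t\<^sup>j\<close> has total degree at most \<open>j\<close> in \<open>x\<close>; the lift is unique modulo \<open>t\<^sup>d\<^sup>+\<^sup>1\<close>, so specialising
  \<open>x := u\<close> gives \<open>P\<^sub>b\<^sub>,\<^sub>u\<close> for every direction in the class of \<open>r\<close>. Put \<open>P(x) = G(x - b, 1)\<close>.
  Then \<open>A(x, P(x))\<close> has total degree at most \<open>D\<close> and vanishes at \<open>b + u\<close> for all those
  directions, more than \<open>D |F|\<^sup>m\<^sup>-\<^sup>1\<close> points, so it is zero by Schwartz--Zippel; uniqueness of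
  lifts once more gives \<open>P(b + t u) = P\<^sub>b\<^sub>,\<^sub>u(t)\<close>.
\<close>

definition is_ring_hom :: "('a::comm_ring_1 \<Rightarrow> 'b::comm_ring_1) \<Rightarrow> bool" where
  "is_ring_hom h \<longleftrightarrow>
     h 0 = 0 \<and> h 1 = 1 \<and> (\<forall>x y. h (x + y) = h x + h y) \<and> (\<forall>x y. h (x * y) = h x * h y)"

lemma is_ring_homD:
  assumes "is_ring_hom h"
  shows "h 0 = 0" "h 1 = 1" "h (x + y) = h x + h y" "h (x * y) = h x * h y"
  using assms unfolding is_ring_hom_def by auto

lemma is_ring_hom_uminus: "is_ring_hom h \<Longrightarrow> h (- x) = - h x"
  using is_ring_homD(1)[of h] is_ring_homD(3)[of h x "-x"]
  by (simp add: eq_neg_iff_add_eq_0 add.commute)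

lemma is_ring_hom_diff: "is_ring_hom h \<Longrightarrow> h (x - y) = h x - h y"
  using is_ring_homD(3)[of h x "-y"] is_ring_hom_uminus[of h y] by simp

lemma is_ring_hom_sum: "is_ring_hom h \<Longrightarrow> h (sum f A) = (\<Sum>a\<in>A. h (f a))"
  by (induction A rule: infinite_finite_induct) (auto simp: is_ring_homD)

lemma is_ring_hom_prod: "is_ring_hom h \<Longrightarrow> h (prod f A) = (\<Prod>a\<in>A. h (f a))"
  by (induction A rule: infinite_finite_induct) (auto simp: is_ring_homD)

lemma is_ring_hom_power: "is_ring_hom h \<Longrightarrow> h (x ^ n) = h x ^ n"
  by (induction n) (auto simp: is_ring_homD)

lemma is_ring_hom_of_nat: "is_ring_hom h \<Longrightarrow> h (of_nat n) = of_nat n"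
  by (induction n) (auto simp: is_ring_homD)

lemma is_ring_hom_dvd: "is_ring_hom h \<Longrightarrow> x dvd y \<Longrightarrow> h x dvd h y"
  by (metis dvdE dvdI is_ring_homD(4))

lemma is_ring_hom_comp: "is_ring_hom h \<Longrightarrow> is_ring_hom g \<Longrightarrow> is_ring_hom (\<lambda>x. g (h x))"
  by (simp add: is_ring_hom_def)

lemma is_ring_hom_id: "is_ring_hom (\<lambda>x. x)"
  by (simp add: is_ring_hom_def)

lemma is_ring_hom_const_poly: "is_ring_hom (\<lambda>c. [:c:])"
  by (simp add: is_ring_hom_def one_pCons)

lemma is_ring_hom_poly: "is_ring_hom (\<lambda>p. poly p x)"
  by (simp add: is_ring_hom_def)

lemma is_ring_hom_mpoly_const: "is_ring_hom (mpoly_const :: 'a::comm_ring_1 \<Rightarrow> 'a mpoly)"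
  by (simp add: is_ring_hom_def mpoly_const_def single_add mult_single)

lemma is_ring_hom_to_ac: "is_ring_hom (to_ac :: 'a::field \<Rightarrow> 'a alg_closure)"
  by (simp add: is_ring_hom_def)

lemma is_ring_hom_map_poly:
  assumes h: "is_ring_hom h"
  shows "is_ring_hom (map_poly h)"
proof -
  have h0: "h 0 = 0" using h by (rule is_ring_homD)
  have "map_poly h (p + q) = map_poly h p + map_poly h q" for p q
    by (rule poly_eqI) (simp add: coeff_map_poly h0 is_ring_homD[OF h])
  moreover have "map_poly h (p * q) = map_poly h p * map_poly h q" for p q
    by (rule poly_eqI)
       (simp add: coeff_map_poly h0 coeff_mult is_ring_homD[OF h] is_ring_hom_sum[OF h])
  ultimately show ?thesis
    unfolding is_ring_hom_def using h0 is_ring_homD(2)[OF h] by simp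
qed

lemma map_poly_pderiv:
  assumes h: "is_ring_hom h"
  shows "map_poly h (pderiv p) = pderiv (map_poly h p)"
  by (rule poly_eqI)
     (simp add: coeff_map_poly is_ring_homD[OF h] coeff_pderiv is_ring_hom_of_nat[OF h])

lemma ring_hom_poly:
  assumes h: "is_ring_hom h"
  shows "h (poly p x) = poly (map_poly h p) (h x)"
proof (induction p)
  case (pCons a p)
  have "map_poly h (pCons a p) = pCons (h a) (map_poly h p)"
    by (simp add: map_poly_pCons is_ring_homD[OF h])
  then show ?case using pCons by (simp add: is_ring_homD[OF h])
qed (simp add: is_ring_homD[OF h])

section \<open>Evaluation of multivariate polynomials\<close>

definition monom_eval :: "(nat \<Rightarrow>\<^sub>0 nat) \<Rightarrow> (nat \<Rightarrow> 'b::comm_semiring_1) \<Rightarrow> 'b" where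
  "monom_eval \<alpha> f = (\<Prod>i\<in>Poly_Mapping.keys \<alpha>. f i ^ Poly_Mapping.lookup \<alpha> i)"

lemma mpoly_eval_altdef:
  "mpoly_eval \<phi> p f = (\<Sum>\<alpha>\<in>Poly_Mapping.keys p. \<phi> (Poly_Mapping.lookup p \<alpha>) * monom_eval \<alpha> f)"
  by (simp add: mpoly_eval_def monom_eval_def)

lemma monom_eval_superset:
  assumes "finite I" "Poly_Mapping.keys \<alpha> \<subseteq> I"
  shows "monom_eval \<alpha> f = (\<Prod>i\<in>I. f i ^ Poly_Mapping.lookup \<alpha> i)"
  unfolding monom_eval_def
  by (rule prod.mono_neutral_left) (use assms in \<open>auto simp: in_keys_iff\<close>)

lemma monom_eval_0 [simp]: "monom_eval 0 f = 1"
  by (simp add: monom_eval_def)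

lemma monom_eval_add: "monom_eval (\<alpha> + \<beta>) f = monom_eval \<alpha> f * monom_eval \<beta> f"
proof -
  let ?I = "Poly_Mapping.keys \<alpha> \<union> Poly_Mapping.keys \<beta>"
  have "monom_eval (\<alpha> + \<beta>) f = (\<Prod>i\<in>?I. f i ^ Poly_Mapping.lookup (\<alpha> + \<beta>) i)"
    by (rule monom_eval_superset) (use keys_add[of \<alpha> \<beta>] in auto)
  also have "\<dots> = (\<Prod>i\<in>?I. f i ^ Poly_Mapping.lookup \<alpha> i) * (\<Prod>i\<in>?I. f i ^ Poly_Mapping.lookup \<beta> i)"
    by (simp add: lookup_add power_add prod.distrib)
  also have "\<dots> = monom_eval \<alpha> f * monom_eval \<beta> f"
    by (subst (1 2) monom_eval_superset[of ?I]) auto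
  finally show ?thesis .
qed

lemma mpoly_eval_superset:
  assumes "\<phi> 0 = 0" "finite K" "Poly_Mapping.keys p \<subseteq> K"
  shows "mpoly_eval \<phi> p f = (\<Sum>\<alpha>\<in>K. \<phi> (Poly_Mapping.lookup p \<alpha>) * monom_eval \<alpha> f)"
  unfolding mpoly_eval_altdef
  by (rule sum.mono_neutral_left) (use assms in \<open>auto simp: in_keys_iff\<close>)

lemma mpoly_eval_0 [simp]: "mpoly_eval \<phi> 0 f = 0"
  by (simp add: mpoly_eval_def)

lemma mpoly_eval_single:
  assumes "\<phi> 0 = 0"
  shows "mpoly_eval \<phi> (Poly_Mapping.single \<alpha> c) f = \<phi> c * monom_eval \<alpha> f"
  using assms by (simp add: mpoly_eval_altdef)

lemma mpoly_eval_add: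
  assumes "is_ring_hom \<phi>"
  shows "mpoly_eval \<phi> (p + q) f = mpoly_eval \<phi> p f + mpoly_eval \<phi> q f"
proof -
  let ?K = "Poly_Mapping.keys p \<union> Poly_Mapping.keys q"
  have "mpoly_eval \<phi> (p + q) f = (\<Sum>\<alpha>\<in>?K. \<phi> (Poly_Mapping.lookup (p + q) \<alpha>) * monom_eval \<alpha> f)"
    by (rule mpoly_eval_superset) (use keys_add[of p q] in \<open>auto simp: is_ring_homD[OF assms]\<close>)
  also have "\<dots> = (\<Sum>\<alpha>\<in>?K. \<phi> (Poly_Mapping.lookup p \<alpha>) * monom_eval \<alpha> f)
                 + (\<Sum>\<alpha>\<in>?K. \<phi> (Poly_Mapping.lookup q \<alpha>) * monom_eval \<alpha> f)"
    by (simp add: lookup_add is_ring_homD[OF assms] distrib_right sum.distrib)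
  also have "\<dots> = mpoly_eval \<phi> p f + mpoly_eval \<phi> q f"
    by (subst (1 2) mpoly_eval_superset[of \<phi> ?K]) (auto simp: is_ring_homD[OF assms])
  finally show ?thesis .
qed

lemma poly_mapping_induct_add_single [case_names zero add]:
  assumes "P 0" "\<And>g a b. P g \<Longrightarrow> P (g + Poly_Mapping.single a b)"
  shows "P p"
proof (induction p rule: update_induct)
  case (update f a b)
  then have "Poly_Mapping.update a b f = f + Poly_Mapping.single a b"
    by (intro poly_mapping_eqI) (auto simp: lookup_update lookup_add lookup_single in_keys_iff when_def)
  then show ?case using update assms(2) by simp
qed (use assms in simp)

lemma mpoly_eval_mult:
  assumes h: "is_ring_hom \<phi>"
  shows "mpoly_eval \<phi> (p * q) f = mpoly_eval \<phi> p f * mpoly_eval \<phi> q f"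
proof -
  note h0 = is_ring_homD(1)[OF h]
  have single: "mpoly_eval \<phi> (Poly_Mapping.single a c * q) f
                  = mpoly_eval \<phi> (Poly_Mapping.single a c) f * mpoly_eval \<phi> q f" for a c
  proof (induction q rule: poly_mapping_induct_add_single)
    case (add g a' c')
    have "Poly_Mapping.single a c * (g + Poly_Mapping.single a' c')
            = Poly_Mapping.single a c * g + Poly_Mapping.single (a + a') (c * c')"
      by (simp add: distrib_left mult_single)
    then show ?case using add
      by (simp add: mpoly_eval_add[OF h] mpoly_eval_single[of \<phi>, OF h0] is_ring_homD[OF h]
                    monom_eval_add algebra_simps)
  qed simp
  show ?thesis
    by (induction p rule: poly_mapping_induct_add_single)
       (simp_all add: distrib_right mpoly_eval_add[OF h] single)
qed

lemma mpoly_eval_1 [simp]: "is_ring_hom \<phi> \<Longrightarrow> mpoly_eval \<phi> 1 f = 1"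
  by (simp add: mpoly_eval_altdef is_ring_homD)

lemma is_ring_hom_mpoly_eval:
  assumes "is_ring_hom \<phi>"
  shows "is_ring_hom (\<lambda>p. mpoly_eval \<phi> p f)"
  unfolding is_ring_hom_def using assms by (simp add: mpoly_eval_add mpoly_eval_mult)

lemma ring_hom_mpoly_eval:
  assumes h: "is_ring_hom h" and "\<And>c. h (\<phi> c) = \<psi> c" and "\<And>i. h (f i) = g i"
  shows "h (mpoly_eval \<phi> p f) = mpoly_eval \<psi> p g"
  unfolding mpoly_eval_def
  by (simp add: is_ring_hom_sum[OF h] is_ring_hom_prod[OF h] is_ring_hom_power[OF h]
                is_ring_homD[OF h] assms)

lemma mpoly_eval_const [simp]: "is_ring_hom \<phi> \<Longrightarrow> mpoly_eval \<phi> (mpoly_const c) f = \<phi> c"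
  by (simp add: mpoly_const_def mpoly_eval_single is_ring_homD)

lemma mpoly_eval_var [simp]: "is_ring_hom \<phi> \<Longrightarrow> mpoly_eval \<phi> (mpoly_var i) f = f i"
  by (simp add: mpoly_var_def mpoly_eval_single is_ring_homD monom_eval_def)

lemma mpoly_eval_cong:
  assumes "\<And>\<alpha> i. \<alpha> \<in> Poly_Mapping.keys p \<Longrightarrow> i \<in> Poly_Mapping.keys \<alpha> \<Longrightarrow> f i = g i"
  shows "mpoly_eval \<phi> p f = mpoly_eval \<phi> p g"
  unfolding mpoly_eval_def using assms by (intro sum.cong prod.cong) auto

lemma mpoly_var_power:
  "(mpoly_var a :: 'a::comm_ring_1 mpoly) ^ n = Poly_Mapping.single (Poly_Mapping.single a n) 1"
  by (induction n) (simp_all add: mpoly_var_def mult_single single_add[symmetric])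

lemma monom_eval_mpoly_var:
  "monom_eval \<alpha> (mpoly_var :: nat \<Rightarrow> 'a::comm_ring_1 mpoly) = Poly_Mapping.single \<alpha> 1"
proof (induction \<alpha> rule: poly_mapping_induct_add_single)
  case (add g a n)
  have "monom_eval (Poly_Mapping.single a n) (mpoly_var :: nat \<Rightarrow> 'a mpoly)
          = Poly_Mapping.single (Poly_Mapping.single a n) 1"
    by (simp add: monom_eval_def mpoly_var_power)
  then show ?case using add by (simp add: monom_eval_add mult_single)
qed simp

lemma mpoly_eval_mpoly_var: "mpoly_eval mpoly_const p mpoly_var = (p :: 'a::comm_ring_1 mpoly)"
proof (induction p rule: poly_mapping_induct_add_single)
  case (add g a c)
  then have "mpoly_eval mpoly_const (g + Poly_Mapping.single a c) mpoly_var
               = g + mpoly_const c * Poly_Mapping.single a 1"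
    by (simp add: mpoly_eval_add is_ring_hom_mpoly_const monom_eval_mpoly_var
                  mpoly_eval_single[of mpoly_const] is_ring_homD)
  also have "\<dots> = g + Poly_Mapping.single a c"
    by (simp add: mpoly_const_def mult_single)
  finally show ?case .
qed simp

section \<open>Weighted degrees and variables\<close>

definition monom_wdeg :: "(nat \<Rightarrow> nat) \<Rightarrow> (nat \<Rightarrow>\<^sub>0 nat) \<Rightarrow> nat" where
  "monom_wdeg w \<alpha> = (\<Sum>i\<in>Poly_Mapping.keys \<alpha>. w i * Poly_Mapping.lookup \<alpha> i)"

lemma weighted_deg_altdef: "weighted_deg w p = Max (insert 0 (monom_wdeg w ` Poly_Mapping.keys p))"
  by (simp add: weighted_deg_def monom_wdeg_def)

lemma monom_wdeg_le_weighted_deg: "\<alpha> \<in> Poly_Mapping.keys p \<Longrightarrow> monom_wdeg w \<alpha> \<le> weighted_deg w p"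
  unfolding weighted_deg_altdef by (rule Max_ge) auto

lemma weighted_deg_leI:
  "(\<And>\<alpha>. \<alpha> \<in> Poly_Mapping.keys p \<Longrightarrow> monom_wdeg w \<alpha> \<le> B) \<Longrightarrow> weighted_deg w p \<le> B"
  unfolding weighted_deg_altdef by (subst Max_le_iff) auto

lemma monom_wdeg_superset:
  assumes "finite I" "Poly_Mapping.keys \<alpha> \<subseteq> I"
  shows "monom_wdeg w \<alpha> = (\<Sum>i\<in>I. w i * Poly_Mapping.lookup \<alpha> i)"
  unfolding monom_wdeg_def
  by (rule sum.mono_neutral_left) (use assms in \<open>auto simp: in_keys_iff\<close>)

lemma monom_wdeg_add: "monom_wdeg w (\<alpha> + \<beta>) = monom_wdeg w \<alpha> + monom_wdeg w \<beta>"
proof -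
  let ?I = "Poly_Mapping.keys \<alpha> \<union> Poly_Mapping.keys \<beta>"
  have "monom_wdeg w (\<alpha> + \<beta>) = (\<Sum>i\<in>?I. w i * Poly_Mapping.lookup (\<alpha> + \<beta>) i)"
    by (rule monom_wdeg_superset) (use keys_add[of \<alpha> \<beta>] in auto)
  also have "\<dots> = (\<Sum>i\<in>?I. w i * Poly_Mapping.lookup \<alpha> i) + (\<Sum>i\<in>?I. w i * Poly_Mapping.lookup \<beta> i)"
    by (simp add: lookup_add distrib_left sum.distrib)
  also have "\<dots> = monom_wdeg w \<alpha> + monom_wdeg w \<beta>"
    by (subst (1 2) monom_wdeg_superset[of ?I]) auto
  finally show ?thesis .
qed

lemma weighted_deg_add: "weighted_deg w (p + q) \<le> max (weighted_deg w p) (weighted_deg w q)"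
proof (rule weighted_deg_leI)
  fix \<alpha> assume "\<alpha> \<in> Poly_Mapping.keys (p + q)"
  then have "\<alpha> \<in> Poly_Mapping.keys p \<or> \<alpha> \<in> Poly_Mapping.keys q" using keys_add[of p q] by auto
  then show "monom_wdeg w \<alpha> \<le> max (weighted_deg w p) (weighted_deg w q)"
    using monom_wdeg_le_weighted_deg[of \<alpha> p w] monom_wdeg_le_weighted_deg[of \<alpha> q w] by auto
qed

lemma weighted_deg_uminus [simp]: "weighted_deg w (- p) = weighted_deg w p"
  by (simp add: weighted_deg_def keys_minus)

lemma weighted_deg_mult: "weighted_deg w (p * q) \<le> weighted_deg w p + weighted_deg w q"
proof (rule weighted_deg_leI)
  fix \<gamma> assume "\<gamma> \<in> Poly_Mapping.keys (p * q)"
  then obtain \<alpha> \<beta> where "\<gamma> = \<alpha> + \<beta>" "\<alpha> \<in> Poly_Mapping.keys p" "\<beta> \<in> Poly_Mapping.keys q"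
    using keys_mult[of p q] by auto
  then show "monom_wdeg w \<gamma> \<le> weighted_deg w p + weighted_deg w q"
    using monom_wdeg_le_weighted_deg[of \<alpha> p w] monom_wdeg_le_weighted_deg[of \<beta> q w]
    by (simp add: monom_wdeg_add)
qed

lemma weighted_deg_0 [simp]: "weighted_deg w 0 = 0"
  by (simp add: weighted_deg_def)

lemma weighted_deg_const [simp]: "weighted_deg w (mpoly_const c) = 0"
  by (rule le_antisym, rule weighted_deg_leI)
     (auto simp: mpoly_const_def monom_wdeg_def split: if_splits)

lemma weighted_deg_var: "weighted_deg w (mpoly_var i :: 'a::zero_neq_one mpoly) = w i"
  unfolding weighted_deg_altdef by (simp add: mpoly_var_def monom_wdeg_def)

lemma weighted_deg_mono:
  assumes "\<And>\<alpha> i. \<alpha> \<in> Poly_Mapping.keys p \<Longrightarrow> i \<in> Poly_Mapping.keys \<alpha> \<Longrightarrow> w i \<le> w' i"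
  shows "weighted_deg w p \<le> weighted_deg w' p"
proof (rule weighted_deg_leI)
  fix \<alpha> assume \<alpha>: "\<alpha> \<in> Poly_Mapping.keys p"
  have "monom_wdeg w \<alpha> \<le> monom_wdeg w' \<alpha>" unfolding monom_wdeg_def
    by (rule sum_mono) (use assms[OF \<alpha>] in \<open>auto intro: mult_right_mono\<close>)
  then show "monom_wdeg w \<alpha> \<le> weighted_deg w' p"
    using monom_wdeg_le_weighted_deg[OF \<alpha>, of w'] by simp
qed

lemma weighted_deg_indicator_le_deg_in:
  "weighted_deg (\<lambda>i. if i = n then 1 else 0) p \<le> deg_in p n"
proof (rule weighted_deg_leI)
  fix \<alpha> assume \<alpha>: "\<alpha> \<in> Poly_Mapping.keys p"
  have "monom_wdeg (\<lambda>i. if i = n then 1 else 0) \<alpha> \<le> Poly_Mapping.lookup \<alpha> n"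
  proof -
    have "(\<lambda>i. (if i = n then 1 else 0) * Poly_Mapping.lookup \<alpha> i)
            = (\<lambda>i. if i = n then Poly_Mapping.lookup \<alpha> i else 0)"
      by auto
    then show ?thesis unfolding monom_wdeg_def by (simp only:) (simp add: sum.delta)
  qed
  also have "\<dots> \<le> deg_in p n" unfolding deg_in_def by (rule Max_ge) (use \<alpha> in auto)
  finally show "monom_wdeg (\<lambda>i. if i = n then 1 else 0) \<alpha> \<le> deg_in p n" .
qed

lemma mpoly_eval_degree_le:
  fixes \<delta> :: "'b::comm_ring_1 \<Rightarrow> nat"
  assumes d0: "\<delta> 0 = 0" and d1: "\<delta> 1 = 0"
    and d_add: "\<And>x y. \<delta> (x + y) \<le> max (\<delta> x) (\<delta> y)"
    and d_mult: "\<And>x y. \<delta> (x * y) \<le> \<delta> x + \<delta> y"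
    and d_const: "\<And>c. \<delta> (\<phi> c) = 0"
  shows "\<delta> (mpoly_eval \<phi> p f) \<le> weighted_deg (\<lambda>i. \<delta> (f i)) p"
proof -
  have sum_le: "\<delta> (sum g A) \<le> B" if "\<And>a. a \<in> A \<Longrightarrow> \<delta> (g a) \<le> B" for g :: "_ \<Rightarrow> 'b" and A B
    using that
  proof (induction A rule: infinite_finite_induct)
    case (insert x F)
    then show ?case using d_add[of "g x" "sum g F"] by (metis insertCI max.bounded_iff order_trans sum.insert)
  qed (auto simp: d0)
  have prod_le: "\<delta> (prod g A) \<le> (\<Sum>a\<in>A. \<delta> (g a))" for g :: "_ \<Rightarrow> 'b" and A
  proof (induction A rule: infinite_finite_induct)
    case (insert x F) then show ?case using d_mult[of "g x" "prod g F"] by auto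
  qed (auto simp: d1)
  have power_le: "\<delta> (x ^ n) \<le> n * \<delta> x" for x n
  proof (induction n)
    case (Suc n) then show ?case using d_mult[of x "x ^ n"] by auto
  qed (simp add: d1)
  show ?thesis unfolding mpoly_eval_altdef
  proof (rule sum_le)
    fix \<alpha> assume \<alpha>: "\<alpha> \<in> Poly_Mapping.keys p"
    have "\<delta> (\<phi> (Poly_Mapping.lookup p \<alpha>) * monom_eval \<alpha> f) \<le> \<delta> (monom_eval \<alpha> f)"
      using d_mult[of "\<phi> (Poly_Mapping.lookup p \<alpha>)"] d_const by (metis add_0)
    also have "\<dots> \<le> (\<Sum>i\<in>Poly_Mapping.keys \<alpha>. \<delta> (f i ^ Poly_Mapping.lookup \<alpha> i))"
      unfolding monom_eval_def by (rule prod_le)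
    also have "\<dots> \<le> monom_wdeg (\<lambda>i. \<delta> (f i)) \<alpha>" unfolding monom_wdeg_def
      by (rule sum_mono) (use power_le in \<open>simp add: mult.commute\<close>)
    also have "\<dots> \<le> weighted_deg (\<lambda>i. \<delta> (f i)) p" by (rule monom_wdeg_le_weighted_deg[OF \<alpha>])
    finally show "\<delta> (\<phi> (Poly_Mapping.lookup p \<alpha>) * monom_eval \<alpha> f) \<le> weighted_deg (\<lambda>i. \<delta> (f i)) p" .
  qed
qed

lemma mpoly_eval_closed:
  fixes Pr :: "'b::comm_ring_1 \<Rightarrow> bool"
  assumes "Pr 0" "Pr 1" "\<And>x y. Pr x \<Longrightarrow> Pr y \<Longrightarrow> Pr (x + y)" "\<And>x y. Pr x \<Longrightarrow> Pr y \<Longrightarrow> Pr (x * y)"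
    and "\<And>c. Pr (\<phi> c)"
    and "\<And>\<alpha> i. \<alpha> \<in> Poly_Mapping.keys p \<Longrightarrow> i \<in> Poly_Mapping.keys \<alpha> \<Longrightarrow> Pr (f i)"
  shows "Pr (mpoly_eval \<phi> p f)"
proof -
  have sum_closed: "Pr (sum g A)" if "\<And>a. a \<in> A \<Longrightarrow> Pr (g a)" for g :: "_ \<Rightarrow> 'b" and A
    using that by (induction A rule: infinite_finite_induct) (auto simp: assms)
  have prod_closed: "Pr (prod g A)" if "\<And>a. a \<in> A \<Longrightarrow> Pr (g a)" for g :: "_ \<Rightarrow> 'b" and A
    using that by (induction A rule: infinite_finite_induct) (auto simp: assms)
  have power_closed: "Pr (x ^ n)" if "Pr x" for x n
    using that by (induction n) (auto simp: assms)
  show ?thesis unfolding mpoly_eval_def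
    by (intro sum_closed assms(4) assms(5) prod_closed power_closed assms(6))
qed

lemma total_deg_add: "total_deg (p + q) \<le> max (total_deg p) (total_deg q)"
  unfolding total_deg_def by (rule weighted_deg_add)

lemma total_deg_mult: "total_deg (p * q) \<le> total_deg p + total_deg q"
  unfolding total_deg_def by (rule weighted_deg_mult)

lemma total_deg_0 [simp]: "total_deg 0 = 0"
  unfolding total_deg_def by simp

lemma total_deg_const [simp]: "total_deg (mpoly_const c) = 0"
  unfolding total_deg_def by simp

lemma total_deg_1 [simp]: "total_deg (1 :: 'a::zero_neq_one mpoly) = 0"
  using total_deg_const[of "1::'a"] by (simp add: mpoly_const_def)

lemma total_deg_var [simp]: "total_deg (mpoly_var i :: 'a::zero_neq_one mpoly) = 1"
  unfolding total_deg_def by (simp add: weighted_deg_var)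

lemma total_deg_diff: "total_deg (p - q :: 'a::ab_group_add mpoly) \<le> max (total_deg p) (total_deg q)"
  using total_deg_add[of p "-q"] by (simp add: total_deg_def)

lemma total_deg_sum: "(\<And>a. a \<in> A \<Longrightarrow> total_deg (g a) \<le> B) \<Longrightarrow> total_deg (sum g A) \<le> B"
proof (induction A rule: infinite_finite_induct)
  case (insert x F)
  then show ?case using total_deg_add[of "g x" "sum g F"] by fastforce
qed auto

lemma total_deg_mpoly_eval:
  fixes \<phi> :: "'a::zero \<Rightarrow> 'b::comm_ring_1 mpoly"
  assumes "\<And>c. total_deg (\<phi> c) = 0"
  shows "total_deg (mpoly_eval \<phi> p f) \<le> weighted_deg (\<lambda>i. total_deg (f i)) p"
  by (rule mpoly_eval_degree_le) (auto simp: assms total_deg_add total_deg_mult)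

lemma degree_mpoly_eval:
  fixes \<phi> :: "'a::zero \<Rightarrow> 'b::comm_ring_1 poly"
  assumes "\<And>c. degree (\<phi> c) = 0"
  shows "degree (mpoly_eval \<phi> p f) \<le> weighted_deg (\<lambda>i. degree (f i)) p"
  by (rule mpoly_eval_degree_le) (auto simp: assms degree_add_le_max degree_mult_le)

lemma mvars_in_keys: "mvars_in p V \<Longrightarrow> \<alpha> \<in> Poly_Mapping.keys p \<Longrightarrow> i \<in> Poly_Mapping.keys \<alpha> \<Longrightarrow> i \<in> V"
  unfolding mvars_in_def by auto

lemma mvars_in_0 [simp]: "mvars_in 0 V"
  by (simp add: mvars_in_def)

lemma mvars_in_1 [simp]: "mvars_in (1::'a::zero_neq_one mpoly) V"
  by (simp add: mvars_in_def)

lemma mvars_in_const [simp]: "mvars_in (mpoly_const c) V"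
  by (simp add: mvars_in_def mpoly_const_def)

lemma mvars_in_var: "i \<in> V \<Longrightarrow> mvars_in (mpoly_var i :: 'a::zero_neq_one mpoly) V"
  by (simp add: mvars_in_def mpoly_var_def)

lemma mvars_in_add: "mvars_in p V \<Longrightarrow> mvars_in q V \<Longrightarrow> mvars_in (p + q) V"
  unfolding mvars_in_def using keys_add[of p q] by blast

lemma mvars_in_mult:
  assumes "mvars_in p V" "mvars_in q V"
  shows "mvars_in (p * q) V"
  unfolding mvars_in_def
proof
  fix \<gamma> assume "\<gamma> \<in> Poly_Mapping.keys (p * q)"
  then obtain \<alpha> \<beta> where "\<gamma> = \<alpha> + \<beta>" "\<alpha> \<in> Poly_Mapping.keys p" "\<beta> \<in> Poly_Mapping.keys q"
    using keys_mult[of p q] by auto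
  then show "Poly_Mapping.keys \<gamma> \<subseteq> V"
    using keys_add[of \<alpha> \<beta>] mvars_in_keys[OF assms(1)] mvars_in_keys[OF assms(2)] by blast
qed

lemma mvars_in_diff: "mvars_in p V \<Longrightarrow> mvars_in q V \<Longrightarrow> mvars_in (p - q :: 'a::ab_group_add mpoly) V"
  unfolding mvars_in_def using keys_add[of p "-q"] by (auto simp: keys_minus)

lemma mvars_in_sum: "(\<And>a. a \<in> A \<Longrightarrow> mvars_in (g a) V) \<Longrightarrow> mvars_in (sum g A) V"
  by (induction A rule: infinite_finite_induct) (auto intro: mvars_in_add)

lemma mvars_in_mpoly_eval:
  fixes f :: "nat \<Rightarrow> 'a::comm_ring_1 mpoly"
  assumes "\<And>\<alpha> i. \<alpha> \<in> Poly_Mapping.keys p \<Longrightarrow> i \<in> Poly_Mapping.keys \<alpha> \<Longrightarrow> mvars_in (f i) V"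
  shows "mvars_in (mpoly_eval mpoly_const p f) V"
  by (rule mpoly_eval_closed[where Pr="\<lambda>x. mvars_in x V"]) (auto simp: assms mvars_in_add mvars_in_mult)

section \<open>The Schwartz--Zippel bound\<close>

definition eval_at :: "'a list \<Rightarrow> 'a::comm_ring_1 mpoly \<Rightarrow> 'a" where
  "eval_at u p = mpoly_eval (\<lambda>c. c) p (\<lambda>i. u ! i)"

lemma is_ring_hom_eval_at: "is_ring_hom (eval_at u)"
  unfolding eval_at_def by (rule is_ring_hom_mpoly_eval[OF is_ring_hom_id])

lemma eval_at_const [simp]: "eval_at u (mpoly_const c) = c"
  by (simp add: eval_at_def is_ring_hom_id)

lemma eval_at_var [simp]: "eval_at u (mpoly_var i) = u ! i"
  by (simp add: eval_at_def is_ring_hom_id)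

lemma eval_at_0 [simp]: "eval_at u 0 = 0"
  by (simp add: is_ring_homD[OF is_ring_hom_eval_at])

lemma eval_at_1 [simp]: "eval_at u 1 = 1"
  by (simp add: is_ring_homD[OF is_ring_hom_eval_at])

definition poly_in_var :: "nat \<Rightarrow> 'a::comm_ring_1 mpoly \<Rightarrow> 'a mpoly poly" where
  "poly_in_var n p =
     mpoly_eval (\<lambda>c. [:mpoly_const c:]) p (\<lambda>i. if i = n then [:0, 1:] else [:mpoly_var i:])"

definition poly_total_deg :: "'a::zero mpoly poly \<Rightarrow> nat" where
  "poly_total_deg g = Max (insert 0 ((\<lambda>j. total_deg (coeff g j) + j) ` {j. coeff g j \<noteq> 0}))"

lemma finite_nonzero_coeffs: "finite {j. coeff g j \<noteq> 0}"
  by (rule finite_subset[of _ "{..degree g}"]) (auto intro: le_degree)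

lemma poly_total_deg_ge: "coeff g j \<noteq> 0 \<Longrightarrow> total_deg (coeff g j) + j \<le> poly_total_deg g"
  unfolding poly_total_deg_def by (rule Max_ge) (auto simp: finite_nonzero_coeffs)

lemma poly_total_deg_leI:
  "(\<And>j. coeff g j \<noteq> 0 \<Longrightarrow> total_deg (coeff g j) + j \<le> B) \<Longrightarrow> poly_total_deg g \<le> B"
  unfolding poly_total_deg_def by (subst Max_le_iff) (auto simp: finite_nonzero_coeffs)

lemma poly_total_deg_0 [simp]: "poly_total_deg 0 = 0"
  by (rule le_antisym, rule poly_total_deg_leI) auto

lemma poly_total_deg_1 [simp]: "poly_total_deg (1 :: 'a::comm_ring_1 mpoly poly) = 0"
proof -
  have "(1 :: 'a mpoly) = mpoly_const 1" by (simp add: mpoly_const_def)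
  then show ?thesis
    by (intro le_antisym poly_total_deg_leI) (auto simp: coeff_1 split: if_splits)
qed

lemma poly_total_deg_const [simp]: "poly_total_deg [:mpoly_const c:] = 0"
  by (rule le_antisym, rule poly_total_deg_leI) (auto simp: coeff_pCons split: nat.splits)

lemma poly_total_deg_X: "poly_total_deg [:0, 1 :: 'a::comm_ring_1 mpoly:] \<le> 1"
proof -
  have "(1 :: 'a mpoly) = mpoly_const 1" by (simp add: mpoly_const_def)
  then show ?thesis
    by (intro poly_total_deg_leI) (auto simp: coeff_pCons split: nat.splits)
qed

lemma poly_total_deg_var: "poly_total_deg [:mpoly_var i :: 'a::comm_ring_1 mpoly:] \<le> 1"
  by (intro poly_total_deg_leI) (auto simp: coeff_pCons split: nat.splits)

lemma poly_total_deg_add: "poly_total_deg (g + h) \<le> max (poly_total_deg g) (poly_total_deg h)"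
proof (rule poly_total_deg_leI)
  fix j assume nz: "coeff (g + h) j \<noteq> 0"
  consider "coeff g j = 0" | "coeff h j = 0" | "coeff g j \<noteq> 0" "coeff h j \<noteq> 0" by blast
  then show "total_deg (coeff (g + h) j) + j \<le> max (poly_total_deg g) (poly_total_deg h)"
    by cases (use nz poly_total_deg_ge[of g j] poly_total_deg_ge[of h j]
                  total_deg_add[of "coeff g j" "coeff h j"] in auto)
qed

lemma poly_total_deg_mult: "poly_total_deg (g * h) \<le> poly_total_deg g + poly_total_deg h"
proof (rule poly_total_deg_leI)
  fix n assume nz: "coeff (g * h) n \<noteq> 0"
  let ?B = "poly_total_deg g + poly_total_deg h"
  have term_le: "total_deg (coeff g i * coeff h (n - i)) + n \<le> ?B"
    if "i \<le> n" "coeff g i * coeff h (n - i) \<noteq> 0" for i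
  proof -
    from that(2) have "coeff g i \<noteq> 0" "coeff h (n - i) \<noteq> 0" by auto
    then show ?thesis
      using that(1) poly_total_deg_ge[of g i] poly_total_deg_ge[of h "n - i"]
        total_deg_mult[of "coeff g i" "coeff h (n - i)"] by linarith
  qed
  obtain i where "i \<le> n" "coeff g i * coeff h (n - i) \<noteq> 0"
    using nz unfolding coeff_mult by (metis (no_types, lifting) atMost_iff sum.neutral)
  then have "n \<le> ?B" using term_le by fastforce
  moreover have "total_deg (coeff (g * h) n) \<le> ?B - n" unfolding coeff_mult
  proof (rule total_deg_sum)
    fix i assume "i \<in> {..n}"
    then show "total_deg (coeff g i * coeff h (n - i)) \<le> ?B - n"
      using term_le[of i] by (cases "coeff g i * coeff h (n - i) = 0") auto
  qed
  ultimately show "total_deg (coeff (g * h) n) + n \<le> ?B" by linarith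
qed

lemma poly_total_deg_poly_in_var: "poly_total_deg (poly_in_var n p) \<le> total_deg p"
proof -
  have "poly_total_deg (poly_in_var n p)
          \<le> weighted_deg (\<lambda>i. poly_total_deg (if i = n then [:0,1:] else [:mpoly_var i :: 'a mpoly:])) p"
    unfolding poly_in_var_def
    by (rule mpoly_eval_degree_le) (auto simp: poly_total_deg_add poly_total_deg_mult)
  also have "\<dots> \<le> weighted_deg (\<lambda>_. 1) p"
    by (rule weighted_deg_mono) (use poly_total_deg_X[where 'a='a] poly_total_deg_var[where 'a='a] in auto)
  finally show ?thesis by (simp add: total_deg_def)
qed

lemma total_deg_lead_coeff_poly_in_var:
  "total_deg (lead_coeff (poly_in_var n p)) + degree (poly_in_var n p) \<le> total_deg p"
proof (cases "poly_in_var n p = 0")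
  case False
  then show ?thesis
    using poly_total_deg_ge[of "poly_in_var n p" "degree (poly_in_var n p)"]
      poly_total_deg_poly_in_var[of n p] by simp
qed simp

lemma poly_poly_in_var_var: "poly (poly_in_var n p) (mpoly_var n) = (p :: 'a::comm_ring_1 mpoly)"
proof -
  have "poly (poly_in_var n p) (mpoly_var n) = mpoly_eval mpoly_const p mpoly_var"
    unfolding poly_in_var_def by (rule ring_hom_mpoly_eval[OF is_ring_hom_poly]) auto
  then show ?thesis by (simp add: mpoly_eval_mpoly_var)
qed

lemma mvars_in_coeff_poly_in_var:
  assumes "mvars_in p {..<Suc n}"
  shows "mvars_in (coeff (poly_in_var n p) j) {..<n}"
proof -
  let ?Pr = "\<lambda>g::'a mpoly poly. \<forall>j. mvars_in (coeff g j) {..<n}"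
  have "?Pr (poly_in_var n p)" unfolding poly_in_var_def
  proof (rule mpoly_eval_closed[where Pr="?Pr"])
    show "?Pr (x * y)" if "?Pr x" "?Pr y" for x y
      using that by (auto simp: coeff_mult intro!: mvars_in_sum mvars_in_mult)
    show "?Pr (if i = n then [:0, 1:] else [:mpoly_var i:])"
      if "\<alpha> \<in> Poly_Mapping.keys p" "i \<in> Poly_Mapping.keys \<alpha>" for \<alpha> i
      using mvars_in_keys[OF assms that] by (auto simp: coeff_pCons mvars_in_var split: nat.splits)
  qed (auto simp: coeff_1 mvars_in_add coeff_pCons split: nat.splits)
  then show ?thesis by simp
qed

lemma eval_at_snoc:
  fixes p :: "'a::comm_ring_1 mpoly"
  assumes "mvars_in p {..<Suc n}" "length v = n"
  shows "eval_at (v @ [a]) p = poly (map_poly (eval_at v) (poly_in_var n p)) a"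
proof -
  have hom: "is_ring_hom (\<lambda>g. poly (map_poly (eval_at v) g) a)"
    by (rule is_ring_hom_comp[OF is_ring_hom_map_poly[OF is_ring_hom_eval_at] is_ring_hom_poly])
  have "poly (map_poly (eval_at v) (poly_in_var n p)) a
          = mpoly_eval (\<lambda>c. c) p (\<lambda>i. if i = n then a else v ! i)"
    unfolding poly_in_var_def by (rule ring_hom_mpoly_eval[OF hom]) (auto simp: map_poly_pCons)
  also have "\<dots> = eval_at (v @ [a]) p"
    unfolding eval_at_def
  proof (rule mpoly_eval_cong)
    fix \<alpha> i assume "\<alpha> \<in> Poly_Mapping.keys p" "i \<in> Poly_Mapping.keys \<alpha>"
    then have "i < Suc n" using mvars_in_keys[OF assms(1)] by auto
    then show "(if i = n then a else v ! i) = (v @ [a]) ! i" using assms(2) by (auto simp: nth_append)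
  qed
  finally show ?thesis by simp
qed

lemma keys_subset_0_if_no_vars: "mvars_in p {} \<Longrightarrow> Poly_Mapping.keys p \<subseteq> {0}"
  unfolding mvars_in_def by auto

lemma eval_at_no_vars: "mvars_in p {} \<Longrightarrow> eval_at u p = Poly_Mapping.lookup p 0"
  unfolding eval_at_def by (subst mpoly_eval_superset[OF _ _ keys_subset_0_if_no_vars]) auto

lemma lookup_0_no_vars:
  assumes "mvars_in p {}" "p \<noteq> 0"
  shows "Poly_Mapping.lookup p 0 \<noteq> 0"
proof
  assume "Poly_Mapping.lookup p 0 = 0"
  then have "0 \<notin> Poly_Mapping.keys p" by (simp add: in_keys_iff)
  then have "Poly_Mapping.keys p = {}" using keys_subset_0_if_no_vars[OF assms(1)] by blast
  then show False using assms(2) by simp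
qed

lemma finite_lists_length: "finite {xs :: 'a::finite list. length xs = n}"
  using finite_lists_length_eq[of "UNIV :: 'a set" n] by simp

lemma card_lists_length: "card {xs :: 'a::finite list. length xs = n} = card (UNIV :: 'a set) ^ n"
  using card_lists_length_eq[of "UNIV :: 'a set" n] by simp

lemma card_eq_sum_card_snoc:
  fixes Z :: "'a::finite list set"
  assumes "Z \<subseteq> {u. length u = Suc n}"
  shows "card Z = (\<Sum>v | length v = n. card {a. v @ [a] \<in> Z})"
proof -
  have "Z = (\<Union>v\<in>{v. length v = n}. (\<lambda>a. v @ [a]) ` {a. v @ [a] \<in> Z})"
  proof (intro equalityI subsetI)
    fix u assume "u \<in> Z"
    then have "length u = Suc n" using assms by blast
    then have "u \<noteq> []" by auto
    then have "u = butlast u @ [last u]" by simp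
    moreover have "length (butlast u) = n" using \<open>length u = Suc n\<close> by simp
    ultimately show "u \<in> (\<Union>v\<in>{v. length v = n}. (\<lambda>a. v @ [a]) ` {a. v @ [a] \<in> Z})"
      using \<open>u \<in> Z\<close> by (metis (mono_tags, lifting) UN_I image_eqI mem_Collect_eq)
  qed blast
  also have "card \<dots> = (\<Sum>v | length v = n. card ((\<lambda>a. v @ [a]) ` {a. v @ [a] \<in> Z}))"
    by (rule card_UN_disjoint) (use finite_lists_length in blast, simp, blast)
  also have "\<dots> = (\<Sum>v | length v = n. card {a. v @ [a] \<in> Z})"
    by (intro sum.cong refl card_image) (simp add: inj_on_def)
  finally show ?thesis .
qed

lemma card_snoc_le:
  fixes Z B :: "'a::finite list set"
  assumes Z: "Z \<subseteq> {u. length u = Suc n}"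
    and few: "\<And>v. length v = n \<Longrightarrow> v \<notin> B \<Longrightarrow> card {a. v @ [a] \<in> Z} \<le> e"
  shows "card Z \<le> card {v \<in> B. length v = n} * card (UNIV :: 'a set) + card (UNIV :: 'a set) ^ n * e"
proof -
  let ?q = "card (UNIV :: 'a set)"
  have "card {a. v @ [a] \<in> Z} \<le> (if v \<in> B then ?q else 0) + e" if "length v = n" for v
  proof (cases "v \<in> B")
    case True
    then show ?thesis using card_mono[of UNIV "{a. v @ [a] \<in> Z}"] by simp
  qed (use few[OF that] in simp)
  then have "card Z \<le> (\<Sum>v | length v = n. (if v \<in> B then ?q else 0) + e)"
    unfolding card_eq_sum_card_snoc[OF Z] by (intro sum_mono) simp
  also have "\<dots> = card {v \<in> B. length v = n} * ?q + ?q ^ n * e"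
    using sum.inter_filter[OF finite_lists_length[of n], of "\<lambda>_. ?q" "\<lambda>v. v \<in> B"]
    by (simp add: sum.distrib card_lists_length conj_commute)
  finally show ?thesis .
qed

theorem schwartz_zippel:
  fixes p :: "'a::{field,finite} mpoly"
  assumes "mvars_in p {..<n}" "p \<noteq> 0"
  shows "card {u. length u = n \<and> eval_at u p = 0} * card (UNIV :: 'a set) \<le> total_deg p * card (UNIV :: 'a set) ^ n"
  using assms
proof (induction n arbitrary: p)
  case 0
  then show ?case using eval_at_no_vars[of p] lookup_0_no_vars[of p] by simp
next
  case (Suc n)
  let ?q = "card (UNIV :: 'a set)"
  define g where "g = poly_in_var n p"
  define L where "L = lead_coeff g"
  have "g \<noteq> 0" using poly_poly_in_var_var[of n p] Suc.prems(2) by (auto simp: g_def)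
  then have "L \<noteq> 0" by (simp add: L_def)
  have "mvars_in L {..<n}" unfolding L_def g_def by (rule mvars_in_coeff_poly_in_var[OF Suc.prems(1)])
  then have IH: "card {v. length v = n \<and> eval_at v L = 0} * ?q \<le> total_deg L * ?q ^ n"
    using Suc.IH \<open>L \<noteq> 0\<close> by blast
  have few: "card {a. v @ [a] \<in> {u. length u = Suc n \<and> eval_at u p = 0}} \<le> degree g"
    if "length v = n" "v \<notin> {v. eval_at v L = 0}" for v
  proof -
    let ?g = "map_poly (eval_at v) g"
    have "coeff ?g (degree g) \<noteq> 0" using that by (simp add: coeff_map_poly L_def)
    then have "?g \<noteq> 0" by auto
    moreover have "{a. v @ [a] \<in> {u. length u = Suc n \<and> eval_at u p = 0}} = {a. poly ?g a = 0}"
      using eval_at_snoc[OF Suc.prems(1) that(1)] that(1) by (simp add: g_def)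
    ultimately show ?thesis
      using card_poly_roots_bound[of ?g] map_poly_degree_leq[of "eval_at v" g] by simp
  qed
  have "card {u. length u = Suc n \<and> eval_at u p = 0}
          \<le> card {v. length v = n \<and> eval_at v L = 0} * ?q + ?q ^ n * degree g"
    using card_snoc_le[of _ n "{v. eval_at v L = 0}", OF _ few] by (simp add: conj_commute subset_iff)
  then have "card {u. length u = Suc n \<and> eval_at u p = 0} * ?q
               \<le> (card {v. length v = n \<and> eval_at v L = 0} * ?q + ?q ^ n * degree g) * ?q"
    by (rule mult_le_mono1)
  also have "\<dots> = card {v. length v = n \<and> eval_at v L = 0} * ?q * ?q + degree g * ?q ^ Suc n"
    by (simp add: algebra_simps)
  also have "\<dots> \<le> (total_deg L + degree g) * ?q ^ Suc n"
    using mult_le_mono1[OF IH, of ?q] by (simp add: algebra_simps)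
  also have "\<dots> \<le> total_deg p * ?q ^ Suc n"
    using total_deg_lead_coeff_poly_in_var[of n p] by (simp add: L_def g_def)
  finally show ?case .
qed

corollary mpoly_eq_0_if_many_zeros:
  fixes p :: "'a::{field,finite} mpoly"
  assumes "mvars_in p {..<m}" "m \<ge> 1" "total_deg p \<le> D"
    and zeros: "\<And>u. u \<in> T \<Longrightarrow> length u = m \<and> eval_at u p = 0"
    and many: "card T > D * card (UNIV :: 'a set) ^ (m - 1)"
  shows "p = 0"
proof (rule ccontr)
  assume "p \<noteq> 0"
  let ?q = "card (UNIV :: 'a set)"
  have "card T \<le> card {u. length u = m \<and> eval_at u p = 0}"
    by (rule card_mono[OF finite_subset[OF _ finite_lists_length[of m]]]) (use zeros in auto)
  then have "card T * ?q \<le> total_deg p * ?q ^ m"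
    using schwartz_zippel[OF assms(1) \<open>p \<noteq> 0\<close>] by (meson le_trans mult_le_mono1)
  also have "\<dots> \<le> (D * ?q ^ (m - 1)) * ?q"
    using \<open>m \<ge> 1\<close> \<open>total_deg p \<le> D\<close> by (cases m) (simp_all add: algebra_simps)
  finally show False using many by simp
qed

section \<open>Newton--Hensel lifting of a simple root\<close>

text \<open>Here \<open>f \<in> R[t][Z]\<close>, and congruence modulo \<open>t\<^sup>k\<close> is divisibility by \<open>monom 1 k\<close>.\<close>

lemma poly_first_order_expansion:
  fixes f :: "'r::idom poly poly" and h :: "'r poly"
  obtains Q where "\<And>g. poly f g = poly f h + (g - h) * poly Q g" "poly (pderiv f) h = poly Q h"
proof -
  have "[:-h, 1:] dvd f - [:poly f h:]" by (subst poly_eq_0_iff_dvd[symmetric]) simp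
  then obtain Q where "f - [:poly f h:] = [:-h, 1:] * Q" by (erule dvdE)
  then have f: "f = [:poly f h:] + [:-h, 1:] * Q" by (simp add: algebra_simps)
  have "poly f g = poly f h + (g - h) * poly Q g" for g
    by (subst f) (simp add: algebra_simps)
  moreover have "poly (pderiv f) h = poly Q h"
  proof -
    have "pderiv [:-h, 1:] = 1" "pderiv [:poly f h:] = 0" by (simp_all add: pderiv_pCons)
    then have "pderiv f = [:-h, 1:] * pderiv Q + Q * 1"
      by (subst f) (simp only: pderiv_add pderiv_mult add_0_left)
    then show ?thesis by simp
  qed
  ultimately show ?thesis by (rule that)
qed

lemma poly_poly_at_0_cong:
  fixes Q :: "'r::idom poly poly"
  assumes "poly g 0 = poly h 0"
  shows "poly (poly Q g) 0 = poly (poly Q h) 0"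
  using ring_hom_poly[OF is_ring_hom_poly, of Q g 0] ring_hom_poly[OF is_ring_hom_poly, of Q h 0] assms
  by simp

lemma poly_poly_pderiv_at_0:
  fixes f :: "'r::idom poly poly"
  shows "poly (poly (pderiv f) h) 0 = poly (pderiv (map_poly (\<lambda>x. poly x 0) f)) (poly h 0)"
  using ring_hom_poly[OF is_ring_hom_poly, of "pderiv f" h 0] map_poly_pderiv[OF is_ring_hom_poly, of 0 f]
  by simp

lemma monom_dvd_mult_cancel:
  fixes p q :: "'k::idom poly"
  assumes "poly q 0 \<noteq> 0" "monom 1 n dvd p * q"
  shows "monom 1 n dvd p"
  using assms(2)
proof (induction n arbitrary: p)
  case (Suc n)
  have m: "monom (1::'k) (Suc n) = monom 1 1 * monom 1 n" by (simp add: mult_monom)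
  have "monom 1 1 dvd p * q" using Suc.prems m by (metis dvd_mult_left)
  then have "coeff (p * q) 0 = 0" by (simp add: monom_1_dvd_iff')
  then have "coeff p 0 * coeff q 0 = 0" by (simp add: coeff_mult)
  then have "coeff p 0 = 0" using assms(1) by (simp add: poly_0_coeff_0)
  then have "monom 1 1 dvd p" by (simp add: monom_1_dvd_iff')
  then obtain p' where p': "p = monom 1 1 * p'" by (erule dvdE)
  have "monom 1 1 * monom 1 n dvd monom 1 1 * (p' * q)" using Suc.prems m p' by (simp add: mult.assoc)
  then have "monom 1 n dvd p' * q" by (simp add: monom_eq_0_iff)
  then have "monom 1 n dvd p'" by (rule Suc.IH)
  then show ?case using p' m by (simp add: mult_dvd_mono)
qed simp

lemma hensel_lift_unique:
  fixes f :: "'k::idom poly poly" and g h :: "'k poly"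
  assumes "poly g 0 = poly h 0" "monom 1 n dvd poly f g" "monom 1 n dvd poly f h"
    and "poly (poly (pderiv f) h) 0 \<noteq> 0"
  shows "monom 1 n dvd g - h"
proof -
  obtain Q where Q: "\<And>g. poly f g = poly f h + (g - h) * poly Q g" "poly (pderiv f) h = poly Q h"
    using poly_first_order_expansion[of f h] by blast
  have "poly (poly Q g) 0 \<noteq> 0"
    using assms(4) Q(2) poly_poly_at_0_cong[OF assms(1), of Q] by simp
  moreover have "monom 1 n dvd (g - h) * poly Q g"
    using dvd_diff[OF assms(2,3)] Q(1)[of g] by simp
  ultimately show ?thesis by (rule monom_dvd_mult_cancel)
qed

lemma poly_eq_0_if_monom_dvd:
  fixes p :: "'k::comm_ring_1 poly"
  assumes "monom 1 n dvd p" "degree p < n"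
  shows "p = 0"
proof (rule poly_eqI)
  fix j
  show "coeff p j = coeff 0 j"
    using assms by (cases "j < n") (auto simp: monom_1_dvd_iff' coeff_eq_0)
qed

text \<open>Newton's iteration, one coefficient of \<open>t\<close> at a time; \<open>c\<close> is to be the inverse of
  \<open>\<partial>f/\<partial>Z\<close> at \<open>(t, Z) = (0, s)\<close>.\<close>

fun hensel_lift :: "'r::idom poly poly \<Rightarrow> 'r \<Rightarrow> 'r \<Rightarrow> nat \<Rightarrow> 'r poly" where
  "hensel_lift f s c 0 = [:s:]"
| "hensel_lift f s c (Suc k) =
     hensel_lift f s c k - monom (c * coeff (poly f (hensel_lift f s c k)) (Suc k)) (Suc k)"

lemma coeff_0_hensel_lift: "coeff (hensel_lift f s c k) 0 = s"
  by (induction k) (auto simp: coeff_monom)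

lemma degree_hensel_lift_le: "degree (hensel_lift f s c k) \<le> k"
proof (induction k)
  case (Suc k)
  then show ?case
    by (simp del: hensel_lift.simps(1)) (meson degree_diff_le degree_monom_le le_SucI order_trans)
qed simp

lemma monom_dvd_poly_hensel_lift:
  fixes f :: "'r::idom poly poly"
  assumes root: "poly (map_poly (\<lambda>x. poly x 0) f) s = 0"
    and inv: "c * poly (pderiv (map_poly (\<lambda>x. poly x 0) f)) s = 1"
  shows "monom 1 (Suc k) dvd poly f (hensel_lift f s c k)"
proof (induction k)
  case 0
  have "poly (poly f [:s:]) 0 = 0"
    using ring_hom_poly[OF is_ring_hom_poly, of f "[:s:]" 0] root by simp
  then show ?case by (simp add: monom_1_dvd_iff' poly_0_coeff_0)
next
  case (Suc k)
  define h where "h = hensel_lift f s c k"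
  define e where "e = coeff (poly f h) (Suc k)"
  define g where "g = hensel_lift f s c (Suc k)"
  have g: "g = h - monom (c * e) (Suc k)" by (simp add: g_def h_def e_def)
  obtain Q where Q: "\<And>g. poly f g = poly f h + (g - h) * poly Q g" "poly (pderiv f) h = poly Q h"
    using poly_first_order_expansion[of f h] by blast
  have gh0: "poly h 0 = s" "poly g 0 = s"
    by (simp_all add: poly_0_coeff_0 h_def g_def coeff_0_hensel_lift)
  have "coeff (poly Q g) 0 = poly (poly (pderiv f) h) 0"
    using poly_poly_at_0_cong[of g h Q] gh0 Q(2) by (simp add: poly_0_coeff_0)
  then have Q0: "c * coeff (poly Q g) 0 = 1"
    using poly_poly_pderiv_at_0[of f h] gh0 inv by simp
  have pf: "poly f g = poly f h - monom (c * e) (Suc k) * poly Q g"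
    using Q(1)[of g] g by simp
  have "coeff (poly f g) j = 0" if "j < Suc (Suc k)" for j
  proof (cases "j < Suc k")
    case True
    then show ?thesis using Suc.IH by (simp add: pf coeff_monom_mult monom_1_dvd_iff' h_def)
  next
    case False
    then have "j = Suc k" using that by simp
    moreover have "c * (e * coeff (poly Q g) 0) = e" using Q0 by (metis mult.left_commute mult_1_right)
    ultimately show ?thesis by (simp add: pf coeff_monom_mult mult.assoc e_def[symmetric])
  qed
  then show ?case by (simp add: monom_1_dvd_iff' g_def)
qed

definition deg_graded :: "'a::comm_ring_1 mpoly poly \<Rightarrow> bool" where
  "deg_graded g \<longleftrightarrow> (\<forall>j. total_deg (coeff g j) \<le> j)"

lemma deg_graded_add:
  assumes "deg_graded g" "deg_graded h"
  shows "deg_graded (g + h)"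
  unfolding deg_graded_def
proof
  fix j
  have "total_deg (coeff g j) \<le> j" "total_deg (coeff h j) \<le> j"
    using assms by (simp_all add: deg_graded_def)
  then show "total_deg (coeff (g + h) j) \<le> j"
    using total_deg_add[of "coeff g j" "coeff h j"] by simp
qed

lemma deg_graded_diff:
  assumes "deg_graded g" "deg_graded h"
  shows "deg_graded (g - h)"
  unfolding deg_graded_def
proof
  fix j
  have "total_deg (coeff g j) \<le> j" "total_deg (coeff h j) \<le> j"
    using assms by (simp_all add: deg_graded_def)
  then show "total_deg (coeff (g - h) j) \<le> j"
    using total_deg_diff[of "coeff g j" "coeff h j"] by simp
qed

lemma deg_graded_mult:
  assumes "deg_graded g" "deg_graded h"
  shows "deg_graded (g * h)"
  unfolding deg_graded_def
proof
  fix n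
  show "total_deg (coeff (g * h) n) \<le> n" unfolding coeff_mult
  proof (rule total_deg_sum)
    fix i assume "i \<in> {..n}"
    moreover have "total_deg (coeff g i) \<le> i" "total_deg (coeff h (n - i)) \<le> n - i"
      using assms by (simp_all add: deg_graded_def)
    ultimately show "total_deg (coeff g i * coeff h (n - i)) \<le> n"
      using total_deg_mult[of "coeff g i" "coeff h (n - i)"] by simp
  qed
qed

lemma deg_graded_0 [simp]: "deg_graded 0"
  by (simp add: deg_graded_def)

lemma deg_graded_1 [simp]: "deg_graded (1 :: 'a::comm_ring_1 mpoly poly)"
  by (simp add: deg_graded_def coeff_1)

lemma deg_graded_const [simp]: "deg_graded [:mpoly_const c:]"
  by (simp add: deg_graded_def coeff_pCons split: nat.splits)

lemma deg_graded_linear [simp]: "deg_graded [:mpoly_const c, mpoly_var i:]"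
  by (simp add: deg_graded_def coeff_pCons split: nat.splits)

lemma deg_graded_monom: "total_deg a \<le> k \<Longrightarrow> deg_graded (monom a k)"
  by (simp add: deg_graded_def coeff_monom)

lemma deg_graded_hensel_lift:
  assumes "\<And>g. deg_graded g \<Longrightarrow> deg_graded (poly f g)"
    and "total_deg s = 0" "total_deg c = 0"
  shows "deg_graded (hensel_lift f s c k)"
proof (induction k)
  case 0
  then show ?case using assms(2) by (simp add: deg_graded_def coeff_pCons split: nat.splits)
next
  case (Suc k)
  have "total_deg (coeff (poly f (hensel_lift f s c k)) (Suc k)) \<le> Suc k"
    using assms(1)[OF Suc.IH] by (simp add: deg_graded_def)
  then have "total_deg (c * coeff (poly f (hensel_lift f s c k)) (Suc k)) \<le> Suc k"
    using total_deg_mult[of c "coeff (poly f (hensel_lift f s c k)) (Suc k)"] assms(3) by simp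
  then show ?case using Suc.IH by (simp add: deg_graded_diff deg_graded_monom)
qed

lemma square_dvd_if_double_root:
  fixes p :: "'a::idom poly"
  assumes "poly p a = 0" "poly (pderiv p) a = 0"
  shows "[:-a, 1:] ^ 2 dvd p"
proof -
  obtain q where q: "p = [:-a, 1:] * q" using assms(1) by (auto simp: poly_eq_0_iff_dvd)
  have "pderiv [:-a, 1:] = 1" by (simp add: pderiv_pCons)
  then have "pderiv p = [:-a, 1:] * pderiv q + q * 1"
    by (subst q) (simp only: pderiv_mult)
  then have "poly q a = 0" using assms(2) by simp
  then obtain q' where "q = [:-a, 1:] * q'" by (auto simp: poly_eq_0_iff_dvd)
  then have "p = [:-a, 1:] ^ 2 * q'" using q by (simp only: power2_eq_square mult.assoc)
  then show ?thesis by (metis dvd_triv_left)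
qed

lemma pderiv_nonzero_if_rsquarefree:
  fixes p :: "'a::field poly"
  assumes sq: "rsquarefree (map_poly to_ac p)" and root: "poly p r = 0"
  shows "poly (pderiv p) r \<noteq> 0"
proof
  have "poly (map_poly to_ac p) (to_ac r) = 0"
    using ring_hom_poly[OF is_ring_hom_to_ac, of p r] root by simp
  moreover assume "poly (pderiv p) r = 0"
  then have "poly (pderiv (map_poly to_ac p)) (to_ac r) = 0"
    using ring_hom_poly[OF is_ring_hom_to_ac, of "pderiv p" r] map_poly_pderiv[OF is_ring_hom_to_ac, of p]
    by simp
  ultimately have "[:-to_ac r, 1:] ^ 2 dvd map_poly to_ac p" by (rule square_dvd_if_double_root)
  then show False using sq unfolding order_divides rsquarefree_def
    by (metis One_nat_def Suc_n_not_le_n le_zero_eq numeral_2_eq_2 zero_neq_numeral)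
qed

section \<open>Lifting a simple root along the lines through \<open>b\<close>\<close>

text \<open>\<open>fiber_poly A m b = A(b, z) \<in> F[z]\<close> and \<open>line_subst A m b u g = A(b + t u, g(t)) \<in> F[t]\<close>.\<close>

definition fiber_poly :: "'a::comm_ring_1 mpoly \<Rightarrow> nat \<Rightarrow> 'a list \<Rightarrow> 'a poly" where
  "fiber_poly A m b = mpoly_eval (\<lambda>c. [:c:]) A (\<lambda>i. if i < m then [:b ! i:] else [:0, 1:])"

definition line_subst :: "'a::comm_ring_1 mpoly \<Rightarrow> nat \<Rightarrow> 'a list \<Rightarrow> 'a list \<Rightarrow> 'a poly \<Rightarrow> 'a poly" where
  "line_subst A m b u g = mpoly_eval (\<lambda>c. [:c:]) A (\<lambda>i. if i < m then [:b ! i, u ! i:] else g)"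

lemma poly_line_subst_0: "poly (line_subst A m b u g) 0 = poly (fiber_poly A m b) (poly g 0)"
proof -
  have "poly (line_subst A m b u g) 0 = mpoly_eval (\<lambda>c. c) A (\<lambda>i. if i < m then b ! i else poly g 0)"
    unfolding line_subst_def by (rule ring_hom_mpoly_eval[OF is_ring_hom_poly]) auto
  also have "\<dots> = poly (fiber_poly A m b) (poly g 0)"
    unfolding fiber_poly_def by (rule ring_hom_mpoly_eval[OF is_ring_hom_poly, symmetric]) auto
  finally show ?thesis .
qed

lemma degree_fiber_poly_le:
  assumes "mvars_in A {..m}"
  shows "degree (fiber_poly A m b) \<le> deg_in A m"
proof -
  have "degree (fiber_poly A m b) \<le> weighted_deg (\<lambda>i. degree (if i < m then [:b ! i:] else [:0, 1:])) A"
    unfolding fiber_poly_def by (rule degree_mpoly_eval) simp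
  also have "\<dots> \<le> weighted_deg (\<lambda>i. if i = m then 1 else 0) A"
  proof (rule weighted_deg_mono)
    fix \<alpha> i assume "\<alpha> \<in> Poly_Mapping.keys A" "i \<in> Poly_Mapping.keys \<alpha>"
    then have "i \<le> m" using mvars_in_keys[OF assms] by auto
    then show "degree (if i < m then [:b ! i:] else [:0, 1 :: 'a:]) \<le> (if i = m then 1 else 0)" by auto
  qed
  also have "\<dots> \<le> deg_in A m" by (rule weighted_deg_indicator_le_deg_in)
  finally show ?thesis .
qed

locale simple_root_lifting =
  fixes A :: "'a::{field,finite} mpoly" and m :: nat and b :: "'a list" and r :: 'a and d :: nat
  assumes A_vars: "mvars_in A {..m}"
    and root: "poly (fiber_poly A m b) r = 0"
    and simple_root: "poly (pderiv (fiber_poly A m b)) r \<noteq> 0"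
begin

definition line_poly :: "'a list \<Rightarrow> 'a poly poly" where
  "line_poly u = mpoly_eval (\<lambda>c. [:[:c:]:]) A (\<lambda>i. if i < m then [:[:b ! i, u ! i:]:] else [:0, 1:])"

lemma poly_line_poly: "poly (line_poly u) g = line_subst A m b u g"
  unfolding line_poly_def line_subst_def by (rule ring_hom_mpoly_eval[OF is_ring_hom_poly]) auto

lemma line_poly_at_0: "map_poly (\<lambda>x. poly x 0) (line_poly u) = fiber_poly A m b"
  unfolding line_poly_def fiber_poly_def
  by (rule ring_hom_mpoly_eval[OF is_ring_hom_map_poly[OF is_ring_hom_poly]]) (auto simp: map_poly_pCons)

lemma line_lift_unique:
  assumes "degree g\<^sub>1 \<le> d" "degree g\<^sub>2 \<le> d" "poly g\<^sub>1 0 = r" "poly g\<^sub>2 0 = r"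
    and "monom 1 (Suc d) dvd line_subst A m b u g\<^sub>1" "monom 1 (Suc d) dvd line_subst A m b u g\<^sub>2"
  shows "g\<^sub>1 = g\<^sub>2"
proof -
  have "poly (poly (pderiv (line_poly u)) g\<^sub>2) 0 \<noteq> 0"
    using poly_poly_pderiv_at_0[of "line_poly u" g\<^sub>2] simple_root assms(4) by (simp add: line_poly_at_0)
  then have "monom 1 (Suc d) dvd g\<^sub>1 - g\<^sub>2"
    using assms(3-6) by (intro hensel_lift_unique[where f="line_poly u"]) (simp_all add: poly_line_poly)
  moreover have "degree (g\<^sub>1 - g\<^sub>2) < Suc d" using assms(1,2) degree_diff_le[of g\<^sub>1 d g\<^sub>2] by simp
  ultimately have "g\<^sub>1 - g\<^sub>2 = 0" by (rule poly_eq_0_if_monom_dvd)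
  then show ?thesis by simp
qed

text \<open>\<open>A(b + t x, Z)\<close>, with the direction \<open>x\<close> kept symbolic.\<close>

definition generic_poly :: "'a mpoly poly poly" where
  "generic_poly = mpoly_eval (\<lambda>c. [:[:mpoly_const c:]:]) A
     (\<lambda>i. if i < m then [:[:mpoly_const (b ! i), mpoly_var i:]:] else [:0, 1:])"

definition generic_lift :: "'a mpoly poly" where
  "generic_lift = hensel_lift generic_poly (mpoly_const r)
     (mpoly_const (inverse (poly (pderiv (fiber_poly A m b)) r))) d"

definition eval_dir :: "'a list \<Rightarrow> 'a mpoly \<Rightarrow> 'a" where
  "eval_dir u p = mpoly_eval (\<lambda>c. c) p (\<lambda>i. if i < m then u ! i else 0)"

lemma is_ring_hom_eval_dir: "is_ring_hom (eval_dir u)"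
  unfolding eval_dir_def by (rule is_ring_hom_mpoly_eval[OF is_ring_hom_id])

lemma generic_poly_at_0: "map_poly (\<lambda>x. poly x 0) generic_poly = map_poly mpoly_const (fiber_poly A m b)"
proof -
  have "map_poly (\<lambda>x. poly x 0) generic_poly
          = mpoly_eval (\<lambda>c. [:mpoly_const c:]) A (\<lambda>i. if i < m then [:mpoly_const (b ! i):] else [:0, 1:])"
    unfolding generic_poly_def
    by (rule ring_hom_mpoly_eval[OF is_ring_hom_map_poly[OF is_ring_hom_poly]]) (auto simp: map_poly_pCons)
  also have "\<dots> = map_poly mpoly_const (fiber_poly A m b)"
    unfolding fiber_poly_def
    by (rule ring_hom_mpoly_eval[OF is_ring_hom_map_poly[OF is_ring_hom_mpoly_const], symmetric])
       (auto simp: map_poly_pCons is_ring_homD[OF is_ring_hom_mpoly_const])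
  finally show ?thesis .
qed

lemma map_poly_eval_dir_generic_poly: "map_poly (map_poly (eval_dir u)) generic_poly = line_poly u"
  unfolding generic_poly_def line_poly_def
  by (rule ring_hom_mpoly_eval[OF is_ring_hom_map_poly[OF is_ring_hom_map_poly[OF is_ring_hom_eval_dir]]])
     (auto simp: map_poly_pCons eval_dir_def is_ring_hom_id)

lemma monom_dvd_poly_generic_lift: "monom 1 (Suc d) dvd poly generic_poly generic_lift"
  unfolding generic_lift_def
proof (rule monom_dvd_poly_hensel_lift)
  note hom = is_ring_hom_mpoly_const
  show "poly (map_poly (\<lambda>x. poly x 0) generic_poly) (mpoly_const r) = 0"
    using ring_hom_poly[OF hom, of "fiber_poly A m b" r] root
    by (simp add: generic_poly_at_0 is_ring_homD[OF hom])
  have "poly (pderiv (map_poly mpoly_const (fiber_poly A m b))) (mpoly_const r)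
          = mpoly_const (poly (pderiv (fiber_poly A m b)) r)"
    using ring_hom_poly[OF hom, of "pderiv (fiber_poly A m b)" r] map_poly_pderiv[OF hom, of "fiber_poly A m b"]
    by simp
  then show "mpoly_const (inverse (poly (pderiv (fiber_poly A m b)) r))
               * poly (pderiv (map_poly (\<lambda>x. poly x 0) generic_poly)) (mpoly_const r) = 1"
    using simple_root by (simp add: generic_poly_at_0 is_ring_homD(4)[OF hom, symmetric] is_ring_homD(2)[OF hom])
qed

lemma degree_generic_lift: "degree generic_lift \<le> d"
  unfolding generic_lift_def by (rule degree_hensel_lift_le)

lemma deg_graded_generic_lift: "deg_graded generic_lift"
  unfolding generic_lift_def
proof (rule deg_graded_hensel_lift)
  fix g :: "'a mpoly poly" assume "deg_graded g"
  moreover have "poly generic_poly g = mpoly_eval (\<lambda>c. [:mpoly_const c:]) A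
                   (\<lambda>i. if i < m then [:mpoly_const (b ! i), mpoly_var i:] else g)"
    unfolding generic_poly_def by (rule ring_hom_mpoly_eval[OF is_ring_hom_poly]) auto
  ultimately show "deg_graded (poly generic_poly g)"
    by (simp only:) (rule mpoly_eval_closed[where Pr=deg_graded], auto intro: deg_graded_add deg_graded_mult)
qed simp_all

lemma map_poly_eval_dir_generic_lift:
  assumes "degree g \<le> d" "poly g 0 = r" "line_subst A m b u g = 0"
  shows "map_poly (eval_dir u) generic_lift = g"
proof (rule line_lift_unique)
  let ?H = "map_poly (eval_dir u)"
  have H: "is_ring_hom ?H" by (rule is_ring_hom_map_poly[OF is_ring_hom_eval_dir])
  show "degree (?H generic_lift) \<le> d"
    using degree_generic_lift map_poly_degree_leq[of "eval_dir u" generic_lift] by linarith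
  show "poly (?H generic_lift) 0 = r"
    using coeff_0_hensel_lift[of generic_poly] by (simp add: poly_0_coeff_0 coeff_map_poly
      generic_lift_def eval_dir_def is_ring_hom_id)
  have "?H (poly generic_poly generic_lift) = poly (line_poly u) (?H generic_lift)"
    using ring_hom_poly[OF H, of generic_poly generic_lift] by (simp add: map_poly_eval_dir_generic_poly)
  moreover have "?H (monom 1 (Suc d)) dvd ?H (poly generic_poly generic_lift)"
    by (rule is_ring_hom_dvd[OF H monom_dvd_poly_generic_lift])
  ultimately show "monom 1 (Suc d) dvd line_subst A m b u (?H generic_lift)"
    by (simp add: map_poly_monom poly_line_poly is_ring_homD[OF is_ring_hom_eval_dir])
qed (use assms in simp_all)

definition lift_mpoly :: "'a mpoly" where
  "lift_mpoly = mpoly_eval mpoly_const (poly generic_lift 1)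
     (\<lambda>i. if i < m then mpoly_var i - mpoly_const (b ! i) else 0)"

lemma total_deg_lift_mpoly: "total_deg lift_mpoly \<le> d"
proof -
  have var_diff: "total_deg (mpoly_var i - mpoly_const c :: 'a mpoly) \<le> 1" for i c
    using total_deg_diff[of "mpoly_var i" "mpoly_const c :: 'a mpoly"] by simp
  have "total_deg lift_mpoly \<le> weighted_deg (\<lambda>_. 1) (poly generic_lift 1)"
    unfolding lift_mpoly_def
    by (rule order_trans[OF total_deg_mpoly_eval weighted_deg_mono]) (use var_diff in auto)
  also have "\<dots> \<le> d"
    unfolding poly_altdef total_deg_def[symmetric]
  proof (rule total_deg_sum)
    fix j assume "j \<in> {..degree generic_lift}"
    then show "total_deg (coeff generic_lift j * 1 ^ j) \<le> d"
      using deg_graded_generic_lift degree_generic_lift by (auto simp: deg_graded_def intro: le_trans)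
  qed
  finally show ?thesis .
qed

lemma mvars_in_lift_mpoly: "mvars_in lift_mpoly {..<m}"
  unfolding lift_mpoly_def by (rule mvars_in_mpoly_eval) (auto intro!: mvars_in_diff mvars_in_var)

lemma eval_lift_mpoly:
  assumes "\<And>i. i < m \<Longrightarrow> x i = b ! i + u ! i"
  shows "mpoly_eval (\<lambda>c. c) lift_mpoly x = poly (map_poly (eval_dir u) generic_lift) 1"
proof -
  have H: "is_ring_hom (\<lambda>p. mpoly_eval (\<lambda>c. c) p x)" by (rule is_ring_hom_mpoly_eval[OF is_ring_hom_id])
  have "mpoly_eval (\<lambda>c. c) lift_mpoly x = eval_dir u (poly generic_lift 1)"
    unfolding lift_mpoly_def eval_dir_def
    by (rule ring_hom_mpoly_eval[OF H]) (auto simp: is_ring_hom_id is_ring_hom_diff[OF H] assms)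
  also have "\<dots> = poly (map_poly (eval_dir u) generic_lift) 1"
    using ring_hom_poly[OF is_ring_hom_eval_dir] by (simp add: is_ring_homD[OF is_ring_hom_eval_dir])
  finally show ?thesis .
qed

lemma lift_mpoly_at_b: "mpoly_eval (\<lambda>c. c) lift_mpoly (\<lambda>i. b ! i) = r"
proof -
  have "line_subst A m b (replicate m 0) [:r:] = [:mpoly_eval (\<lambda>c. c) A (\<lambda>i. if i < m then b ! i else r):]"
    unfolding line_subst_def by (rule ring_hom_mpoly_eval[OF is_ring_hom_const_poly, symmetric]) auto
  also have "mpoly_eval (\<lambda>c. c) A (\<lambda>i. if i < m then b ! i else r) = poly (fiber_poly A m b) r"
    unfolding fiber_poly_def by (rule ring_hom_mpoly_eval[OF is_ring_hom_poly, symmetric]) auto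
  finally have "map_poly (eval_dir (replicate m 0)) generic_lift = [:r:]"
    using root by (intro map_poly_eval_dir_generic_lift) simp_all
  then show ?thesis using eval_lift_mpoly[of "\<lambda>i. b ! i" "replicate m 0"] by simp
qed

definition A_comp_lift :: "'a mpoly" where
  "A_comp_lift = mpoly_eval mpoly_const A (\<lambda>i. if i < m then mpoly_var i else lift_mpoly)"

lemma mvars_in_A_comp_lift: "mvars_in A_comp_lift {..<m}"
  unfolding A_comp_lift_def
  by (rule mvars_in_mpoly_eval) (use mvars_in_lift_mpoly in \<open>auto intro: mvars_in_var\<close>)

lemma total_deg_A_comp_lift: "total_deg A_comp_lift \<le> weighted_deg (\<lambda>i. if i = m then d else 1) A"
proof -
  have "total_deg A_comp_lift \<le> weighted_deg (\<lambda>i. total_deg (if i < m then mpoly_var i else lift_mpoly)) A"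
    unfolding A_comp_lift_def by (rule total_deg_mpoly_eval) simp
  also have "\<dots> \<le> weighted_deg (\<lambda>i. if i = m then d else 1) A"
  proof (rule weighted_deg_mono)
    fix \<alpha> i assume "\<alpha> \<in> Poly_Mapping.keys A" "i \<in> Poly_Mapping.keys \<alpha>"
    then have "i \<le> m" using mvars_in_keys[OF A_vars] by auto
    then show "total_deg (if i < m then mpoly_var i else lift_mpoly) \<le> (if i = m then d else 1)"
      using total_deg_lift_mpoly by auto
  qed
  finally show ?thesis .
qed

lemma eval_A_comp_lift_on_line:
  assumes "length u = m" "degree g \<le> d" "poly g 0 = r" "line_subst A m b u g = 0"
  shows "eval_at (map (\<lambda>i. u ! i + b ! i) [0..<m]) A_comp_lift = 0"
proof -
  let ?x = "\<lambda>i. if i < m then u ! i + b ! i else 0"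
  have H: "is_ring_hom (\<lambda>p. mpoly_eval (\<lambda>c. c) p ?x)" by (rule is_ring_hom_mpoly_eval[OF is_ring_hom_id])
  have P: "mpoly_eval (\<lambda>c. c) lift_mpoly ?x = poly g 1"
    using eval_lift_mpoly[of ?x u] map_poly_eval_dir_generic_lift[OF assms(2-4)] by (simp add: add.commute)
  have "eval_at (map (\<lambda>i. u ! i + b ! i) [0..<m]) A_comp_lift = mpoly_eval (\<lambda>c. c) A_comp_lift ?x"
    unfolding eval_at_def by (rule mpoly_eval_cong) (use mvars_in_keys[OF mvars_in_A_comp_lift] in auto)
  also have "\<dots> = mpoly_eval (\<lambda>c. c) A (\<lambda>i. if i < m then u ! i + b ! i else poly g 1)"
    unfolding A_comp_lift_def by (rule ring_hom_mpoly_eval[OF H]) (auto simp: is_ring_hom_id P)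
  also have "\<dots> = poly (line_subst A m b u g) 1"
    unfolding line_subst_def
    by (rule ring_hom_mpoly_eval[OF is_ring_hom_poly, symmetric]) (auto simp: add.commute)
  finally show ?thesis using assms(4) by simp
qed

lemma A_comp_lift_eq_0:
  assumes "m \<ge> 1" "weighted_deg (\<lambda>i. if i = m then d else 1) A \<le> D"
    and lifts: "\<And>u. u \<in> T \<Longrightarrow>
                  length u = m \<and> degree (g u) \<le> d \<and> poly (g u) 0 = r \<and> line_subst A m b u (g u) = 0"
    and many: "card T > D * card (UNIV :: 'a set) ^ (m - 1)"
  shows "A_comp_lift = 0"
proof (rule mpoly_eq_0_if_many_zeros[OF mvars_in_A_comp_lift assms(1)])
  define shift where "shift u = map (\<lambda>i. u ! i + b ! i) [0..<m]" for u
  show "total_deg A_comp_lift \<le> D" using total_deg_A_comp_lift assms(2) by (rule order_trans)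
  show "length v = m \<and> eval_at v A_comp_lift = 0" if "v \<in> shift ` T" for v
  proof -
    obtain u where "u \<in> T" "v = shift u" using \<open>v \<in> shift ` T\<close> by blast
    then show ?thesis using lifts eval_A_comp_lift_on_line[of u "g u"] by (simp add: shift_def)
  qed
  have "inj_on shift T"
  proof (rule inj_onI)
    fix u v assume "u \<in> T" "v \<in> T" and eq: "shift u = shift v"
    have "u ! i = v ! i" if "i < m" for i
      using arg_cong[OF eq, of "\<lambda>xs. xs ! i"] that by (simp add: shift_def)
    moreover have "length u = m" "length v = m" using lifts \<open>u \<in> T\<close> \<open>v \<in> T\<close> by blast+
    ultimately show "u = v" by (intro nth_equalityI) simp_all
  qed
  then show "card (shift ` T) > D * card (UNIV :: 'a set) ^ (m - 1)"
    using many by (simp add: card_image)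
qed

lemma line_lift_mpoly:
  assumes "A_comp_lift = 0" "degree g \<le> d" "poly g 0 = r" "line_subst A m b u g = 0"
  shows "mpoly_eval (\<lambda>c. [:c:]) lift_mpoly (\<lambda>i. [:b ! i, u ! i:]) = g"
proof (rule line_lift_unique)
  let ?g = "mpoly_eval (\<lambda>c. [:c:]) lift_mpoly (\<lambda>i. [:b ! i, u ! i:])"
  have "degree ?g \<le> weighted_deg (\<lambda>i. degree [:b ! i, u ! i:]) lift_mpoly"
    by (rule degree_mpoly_eval) simp
  also have "\<dots> \<le> total_deg lift_mpoly" unfolding total_deg_def by (rule weighted_deg_mono) simp
  finally show "degree ?g \<le> d" using total_deg_lift_mpoly by linarith
  have "poly ?g 0 = mpoly_eval (\<lambda>c. c) lift_mpoly (\<lambda>i. b ! i)"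
    by (rule ring_hom_mpoly_eval[OF is_ring_hom_poly]) auto
  then show "poly ?g 0 = r" using lift_mpoly_at_b by simp
  have H: "is_ring_hom (\<lambda>p. mpoly_eval (\<lambda>c. [:c:]) p (\<lambda>i. [:b ! i, u ! i:]))"
    by (rule is_ring_hom_mpoly_eval[OF is_ring_hom_const_poly])
  have "mpoly_eval (\<lambda>c. [:c:]) A_comp_lift (\<lambda>i. [:b ! i, u ! i:]) = line_subst A m b u ?g"
    unfolding A_comp_lift_def line_subst_def
    by (rule ring_hom_mpoly_eval[OF H]) (auto simp: is_ring_hom_const_poly)
  then show "monom 1 (Suc d) dvd line_subst A m b u ?g" using assms(1) by simp
qed (use assms in simp_all)

end

lemma exists_large_fiber:
  assumes "finite R" "f ` S \<subseteq> R" "card R \<le> k" "S \<noteq> {}"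
  shows "\<exists>r\<in>R. card S \<le> k * card {u \<in> S. f u = r}"
proof -
  let ?c = "\<lambda>r. card {u \<in> S. f u = r}"
  have "R \<noteq> {}" using assms(2,4) by blast
  then have "Max (?c ` R) \<in> ?c ` R" using assms(1) by (intro Max_in) auto
  then obtain r where r: "r \<in> R" "?c r = Max (?c ` R)" by auto
  have "S = (\<Union>r\<in>R. {u \<in> S. f u = r})" using assms(2) by blast
  then have "card S \<le> (\<Sum>r\<in>R. ?c r)" by (metis card_UN_le assms(1))
  also have "\<dots> \<le> card R * ?c r"
    using sum_mono[of R ?c "\<lambda>_. ?c r"] Max_ge[of "?c ` R"] assms(1) r(2) by simp
  also have "\<dots> \<le> k * ?c r" using assms(3) by simp
  finally show ?thesis using r(1) by blast
qed

lemma common_simple_root: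
  fixes A :: "'a::field mpoly"
  assumes A_vars: "mvars_in A {..m}" and A_degz: "deg_in A m \<le> dz"
    and sep: "rsquarefree (map_poly to_ac (fiber_poly A m b))"
    and lifts: "\<forall>u\<in>S. line_subst A m b u (g u) = 0" and "S \<noteq> {}"
  obtains r where "poly (fiber_poly A m b) r = 0" "poly (pderiv (fiber_poly A m b)) r \<noteq> 0"
    and "card S \<le> dz * card {u \<in> S. poly (g u) 0 = r}"
proof -
  have A_b: "fiber_poly A m b \<noteq> 0" using sep by (auto simp: rsquarefree_def)
  have roots: "card {x. poly (fiber_poly A m b) x = 0} \<le> dz"
    using card_poly_roots_bound[OF A_b] degree_fiber_poly_le[OF A_vars, of b] A_degz by linarith
  have "(\<lambda>u. poly (g u) 0) ` S \<subseteq> {x. poly (fiber_poly A m b) x = 0}"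
  proof safe
    fix u assume "u \<in> S"
    then show "poly (fiber_poly A m b) (poly (g u) 0) = 0"
      using lifts poly_line_subst_0[of A m b u "g u"] by simp
  qed
  then obtain r where "poly (fiber_poly A m b) r = 0" "card S \<le> dz * card {u \<in> S. poly (g u) 0 = r}"
    using exists_large_fiber[OF poly_roots_finite[OF A_b] _ roots \<open>S \<noteq> {}\<close>] by blast
  then show ?thesis using that pderiv_nonzero_if_rsquarefree[OF sep] by blast
qed

theorem lemma3p1:
  fixes A :: "'a::{field,finite} mpoly"
    and m d dz D :: nat
    and b :: "'a list"
    and S :: "'a list set"
    and Pbu :: "'a list \<Rightarrow> 'a poly"
  assumes m: "m \<ge> 1"
    and dz: "dz \<ge> 1"
    and A_vars: "mvars_in A {..m}"
    and A_nz: "A \<noteq> 0"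
    and A_degz: "deg_in A m \<le> dz"
    and A_wdeg: "weighted_deg (\<lambda>i. if i = m then d else 1) A \<le> D"
    and b_len: "length b = m"
    and b_sep: "rsquarefree (map_poly to_ac
                  (mpoly_eval (\<lambda>c. [:c:]) A (\<lambda>i. if i < m then [:b ! i:] else [:0, 1:])))"
    and S_dim: "\<forall>u\<in>S. length u = m"
    and Pbu: "\<forall>u\<in>S. degree (Pbu u) \<le> d \<and>
               mpoly_eval (\<lambda>c. [:c:]) A (\<lambda>i. if i < m then [:b ! i, u ! i:] else Pbu u) = 0"
    and S_large: "card S > dz * D * card (UNIV :: 'a set) ^ (m - 1)"
  shows "\<exists>P :: 'a mpoly. mvars_in P {..<m} \<and> total_deg P \<le> d \<and>
           mpoly_eval mpoly_const A (\<lambda>i. if i < m then mpoly_var i else P) = 0 \<and>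
           (\<exists>S'\<subseteq>S. real (card S') \<ge> real (card S) / real dz \<and>
              (\<forall>u\<in>S'. mpoly_eval (\<lambda>c. [:c:]) P (\<lambda>i. [:b ! i, u ! i:]) = Pbu u))"
proof -
  define fiber where "fiber r = {u \<in> S. poly (Pbu u) 0 = r}" for r
  have "\<forall>u\<in>S. line_subst A m b u (Pbu u) = 0" using Pbu by (simp add: line_subst_def)
  moreover have "S \<noteq> {}" using S_large by (intro notI) simp
  ultimately obtain r where "poly (fiber_poly A m b) r = 0" "poly (pderiv (fiber_poly A m b)) r \<noteq> 0"
    and large: "card S \<le> dz * card (fiber r)"
    using common_simple_root[OF A_vars A_degz b_sep[folded fiber_poly_def]] unfolding fiber_def by blast
  then interpret simple_root_lifting A m b r d using A_vars by unfold_locales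
  have lifts: "length u = m \<and> degree (Pbu u) \<le> d \<and> poly (Pbu u) 0 = r \<and> line_subst A m b u (Pbu u) = 0"
    if "u \<in> fiber r" for u
    using that S_dim Pbu by (simp add: fiber_def line_subst_def)
  have "dz * (D * card (UNIV :: 'a set) ^ (m - 1)) < dz * card (fiber r)"
    using S_large large unfolding mult.assoc[symmetric] by linarith
  then have many: "D * card (UNIV :: 'a set) ^ (m - 1) < card (fiber r)" by (metis mult_less_cancel1)
  have A_lift: "A_comp_lift = 0" by (rule A_comp_lift_eq_0[OF m A_wdeg lifts many])
  have "real (card S) \<le> real dz * real (card (fiber r))" using large by (metis of_nat_le_iff of_nat_mult)
  then have "real (card S) / real dz \<le> real (card (fiber r))" using dz by (simp add: divide_le_eq mult.commute)
  moreover have "fiber r \<subseteq> S" by (auto simp: fiber_def)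
  moreover have "\<forall>u\<in>fiber r. mpoly_eval (\<lambda>c. [:c:]) lift_mpoly (\<lambda>i. [:b ! i, u ! i:]) = Pbu u"
    using line_lift_mpoly[OF A_lift] lifts by simp
  ultimately show ?thesis
    using mvars_in_lift_mpoly total_deg_lift_mpoly A_lift unfolding A_comp_lift_def by blast
qed

end
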